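(* Let $\alpha\ge-1$ and $0<q<r$. Then $G_{\alpha,q}(g)\le G_{\alpha,r}(g)$ for every $g\in\mathcal{H}(\mathbb{D})$.
   Context: $\mathbb{D}$ unit disc, $\mathcal{H}(\mathbb{D})$ analytic functions, $dA$ normalized area measure, $\phi_a(z)=\frac{a-z}{1-\bar az}$. For $\alpha>-1$, $0<t<\infty$, $\|f\|_{\alpha,t}^t=(\alpha+1)\int_{\mathbb{D}}|f|^t(1-|z|^2)^\alpha dA$, and $\|f\|_{-1,t}=\|f\|_{H^t}$ (Hardy norm). For $\alpha\ge-1$, $q>0$: $G_{\alpha,q}(g)=\sup_{a\in\mathbb{D}}\bigl(\|g\circ\phi_a\|_{\alpha,2q}^{2q}-|g(a)|^{2q}\bigr)^{1/(2q)}\in[0,\infty]$. *)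

theory Defs
  imports "HOL-Analysis.Analysis"
begin

definition disc_aut :: "complex \<Rightarrow> complex \<Rightarrow> complex" where
  "disc_aut a z = (a - z) / (1 - cnj a * z)"

text \<open>Weighted Bergman quantity ||f||_{alpha,t}^t
  = (alpha+1) * integral over the unit disc of |f|^t (1-|z|^2)^alpha dA,
  with dA = (1/pi) dx dy the normalized area measure (alpha > -1).\<close>
definition bergman_pow :: "real \<Rightarrow> real \<Rightarrow> (complex \<Rightarrow> complex) \<Rightarrow> ennreal" where
  "bergman_pow \<alpha> t f = ennreal (\<alpha> + 1) *
     (\<integral>\<^sup>+ z. indicator (ball 0 1) z *
        ennreal (cmod (f z) powr t * (1 - (cmod z)\<^sup>2) powr \<alpha> / pi) \<partial>lborel)"

definition hardy_pow :: "real \<Rightarrow> (complex \<Rightarrow> complex) \<Rightarrow> ennreal" where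
  "hardy_pow t f = (SUP \<rho>\<in>{0<..<1}.
     \<integral>\<^sup>+ \<theta>. indicator {0..2*pi} \<theta> *
        ennreal (cmod (f (complex_of_real \<rho> * exp (\<i> * complex_of_real \<theta>))) powr t / (2*pi)) \<partial>lborel)"

definition norm_pow :: "real \<Rightarrow> real \<Rightarrow> (complex \<Rightarrow> complex) \<Rightarrow> ennreal" where
  "norm_pow \<alpha> t f = (if \<alpha> = -1 then hardy_pow t f else bergman_pow \<alpha> t f)"

definition eroot :: "real \<Rightarrow> ennreal \<Rightarrow> ennreal" where
  "eroot p x = (if x = top then top else ennreal (enn2real x powr (1 / p)))"

text \<open>G_{alpha,q}(g) = sup_a (||g o phi_a||_{alpha,2q}^{2q} - |g(a)|^{2q})^{1/(2q)} in [0,infinity].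
  (Truncated subtraction of ennreal; the difference is nonnegative anyway.)\<close>
definition G :: "real \<Rightarrow> real \<Rightarrow> (complex \<Rightarrow> complex) \<Rightarrow> ennreal" where
  "G \<alpha> q g = (SUP a\<in>ball 0 1.
     eroot (2*q) (norm_pow \<alpha> (2*q) (g \<circ> disc_aut a) - ennreal (cmod (g a) powr (2*q))))"

end

theory Submission
  imports Defs "HOL-Complex_Analysis.Complex_Analysis"
begin

(* Fix a, put f = g o phi_a and N(p) = ||f||_{alpha,p}^p.  The measures
   (alpha+1)(1-|z|^2)^alpha dA (under dA, 1-|z|^2 is uniformly distributed on [0,1])
   and d theta/(2 pi) on each circle are probability measures, so Jensen's inequality
   for the concave map x -> x^(q/r) gives N(2q) <= N(2r)^(q/r).  Subadditivity of
   x -> x^(q/r) turns this into N(2q) - |g(a)|^(2q) <= (N(2r) - |g(a)|^(2r))^(q/r);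
   taking 2q-th roots and the supremum over a gives the claim. *)

lemma powr_add_le_add_powr:
  fixes x y s :: real
  assumes "0 \<le> x" "0 \<le> y" "0 < s" "s \<le> 1"
  shows "(x + y) powr s \<le> x powr s + y powr s"
proof (cases "x + y = 0")
  case True
  then show ?thesis using assms by simp
next
  case False
  then have xy: "0 < x + y" using assms by linarith
  have "x / (x + y) \<le> (x / (x + y)) powr s" "y / (x + y) \<le> (y / (x + y)) powr s"
    using assms xy powr_mono'[of s 1] by simp_all
  moreover have "x / (x + y) + y / (x + y) = 1"
    using xy by (simp flip: add_divide_distrib)
  ultimately have "(x + y) powr s * 1 \<le> (x + y) powr s * ((x / (x + y)) powr s + (y / (x + y)) powr s)"
    by (intro mult_left_mono) auto
  also have "\<dots> = x powr s + y powr s"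
    using assms xy by (simp add: powr_divide distrib_left)
  finally show ?thesis by simp
qed

lemma powr_le_tangent_line:
  fixes u A s :: real
  assumes "0 \<le> u" "0 < A" "0 < s" "s \<le> 1"
  shows "u powr s \<le> s * A powr (s - 1) * u + (1 - s) * A powr s"
proof (cases "u = 0")
  case True
  then show ?thesis using assms by simp
next
  case False
  have A_pow: "A powr (s - 1) * A = A powr s"
    using assms by (simp add: powr_diff)
  have "u powr s * A powr (1 - s) \<le> s * u + (1 - s) * A"
    using Youngs_inequality_0[of s "1 - s" u A] assms False by simp
  then have "A powr (s - 1) * (u powr s * A powr (1 - s)) \<le> A powr (s - 1) * (s * u + (1 - s) * A)"
    by (intro mult_left_mono) auto
  moreover have "A powr (s - 1) * (u powr s * A powr (1 - s)) = u powr s"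
    using assms by (simp add: mult.left_commute[of "A powr (s - 1)"] flip: powr_add)
  moreover have "A powr (s - 1) * (s * u + (1 - s) * A) = s * A powr (s - 1) * u + (1 - s) * A powr s"
    using A_pow by (simp add: algebra_simps)
  ultimately show ?thesis by simp
qed

lemma nn_integral_powr_le_powr:
  fixes u :: "'a \<Rightarrow> real"
  assumes M: "emeasure M (space M) \<le> 1" and [measurable]: "u \<in> borel_measurable M"
    and u: "\<And>x. 0 \<le> u x" and s: "0 < s" "s \<le> 1"
    and A: "(\<integral>\<^sup>+x. ennreal (u x) \<partial>M) \<le> ennreal A" "0 \<le> A"
  shows "(\<integral>\<^sup>+x. ennreal (u x powr s) \<partial>M) \<le> ennreal (A powr s)"
proof (cases "A = 0")
  case True
  then have "AE x in M. ennreal (u x) = 0"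
    using A by (simp add: nn_integral_0_iff_AE)
  then have "AE x in M. ennreal (u x powr s) = 0"
    by eventually_elim (use u in auto)
  then have "(\<integral>\<^sup>+x. ennreal (u x powr s) \<partial>M) = 0"
    by (simp add: nn_integral_0_iff_AE)
  then show ?thesis by simp
next
  case False
  then have A_pos: "0 < A" using A by simp
  define c1 where "c1 = s * A powr (s - 1)"
  define c2 where "c2 = (1 - s) * A powr s"
  have c: "0 \<le> c1" "0 \<le> c2" using s by (auto simp: c1_def c2_def)
  have "(\<integral>\<^sup>+x. ennreal (u x powr s) \<partial>M) \<le> (\<integral>\<^sup>+x. ennreal c1 * ennreal (u x) + ennreal c2 \<partial>M)"
    using powr_le_tangent_line[OF u A_pos s] c u
    by (intro nn_integral_mono) (simp add: c1_def c2_def flip: ennreal_mult ennreal_plus)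
  also have "\<dots> = ennreal c1 * (\<integral>\<^sup>+x. ennreal (u x) \<partial>M) + ennreal c2 * emeasure M (space M)"
    by (simp add: nn_integral_add nn_integral_cmult)
  also have "\<dots> \<le> ennreal c1 * ennreal A + ennreal c2 * 1"
    by (intro add_mono mult_left_mono A M) auto
  also have "\<dots> = ennreal (A powr s)"
    using c A_pos s by (simp add: c1_def c2_def powr_diff algebra_simps flip: ennreal_mult ennreal_plus)
  finally show ?thesis .
qed

lemma nn_integral_powr_exponent_mono:
  fixes h :: "'a \<Rightarrow> real"
  assumes "emeasure M (space M) \<le> 1" "h \<in> borel_measurable M" "\<And>x. 0 \<le> h x"
    and "0 < p" "p \<le> t"
    and "(\<integral>\<^sup>+x. ennreal (h x powr t) \<partial>M) \<le> ennreal A" "0 \<le> A"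
  shows "(\<integral>\<^sup>+x. ennreal (h x powr p) \<partial>M) \<le> ennreal (A powr (p / t))"
proof -
  have "(\<integral>\<^sup>+x. ennreal ((h x powr t) powr (p / t)) \<partial>M) \<le> ennreal (A powr (p / t))"
    using assms by (intro nn_integral_powr_le_powr) auto
  moreover have "(h x powr t) powr (p / t) = h x powr p" for x
    using assms by (simp add: powr_powr)
  ultimately show ?thesis by simp
qed

lemma eroot_mono:
  assumes "0 < p" "x \<le> y"
  shows "eroot p x \<le> eroot p y"
proof (cases "y = top")
  case True
  then show ?thesis by (simp add: eroot_def)
next
  case False
  with assms(2) have "x \<noteq> top" "enn2real x \<le> enn2real y"
    by (auto simp: top_unique less_top intro: enn2real_mono)
  with False assms(1) show ?thesis
    by (auto simp: eroot_def intro!: ennreal_leI powr_mono2)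
qed

text \<open>The last hypothesis says \<open>X \<le> Y powr (p / t)\<close> in \<open>[0, \<infinity>]\<close>.\<close>
lemma eroot_diff_powr_le:
  fixes X Y :: ennreal and c p t :: real
  assumes pt: "0 < p" "p \<le> t" and c: "0 \<le> c"
    and XY: "\<And>A. 0 \<le> A \<Longrightarrow> Y \<le> ennreal A \<Longrightarrow> X \<le> ennreal (A powr (p / t))"
  shows "eroot p (X - ennreal (c powr p)) \<le> eroot t (Y - ennreal (c powr t))"
proof (cases "Y = top")
  case True
  then show ?thesis by (simp add: eroot_def)
next
  case False
  then obtain A where A: "Y = ennreal A" "0 \<le> A" by (cases Y) auto
  define D where "D = max 0 (A - c powr t)"
  have D: "0 \<le> D" "Y - ennreal (c powr t) = ennreal D"
    using A by (simp_all add: D_def ennreal_minus ennreal_max_0)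
  have "A powr (p / t) \<le> (c powr t + D) powr (p / t)"
    using A pt by (intro powr_mono2) (auto simp: D_def)
  also have "\<dots> \<le> (c powr t) powr (p / t) + D powr (p / t)"
    using D pt by (intro powr_add_le_add_powr) auto
  also have "(c powr t) powr (p / t) = c powr p"
    using pt by (simp add: powr_powr)
  finally have "A powr (p / t) \<le> c powr p + D powr (p / t)" .
  then have "X \<le> ennreal (c powr p) + ennreal (D powr (p / t))"
    using XY[OF A(2)] A(1) by (simp add: order_trans[OF _ ennreal_leI] flip: ennreal_plus)
  then have "X - ennreal (c powr p) \<le> ennreal (D powr (p / t))"
    by (simp add: ennreal_minus_le_iff)
  then have "eroot p (X - ennreal (c powr p)) \<le> eroot p (ennreal (D powr (p / t)))"
    using pt by (intro eroot_mono)
  also have "\<dots> = eroot t (Y - ennreal (c powr t))"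
    using D pt by (simp add: eroot_def powr_powr)
  finally show ?thesis .
qed

definition circle_measure :: "real measure" where
  "circle_measure = density lborel (\<lambda>\<theta>. ennreal (indicator {0..2*pi} \<theta> / (2*pi)))"

lemma emeasure_space_circle_measure: "emeasure circle_measure (space circle_measure) = 1"
proof -
  have "emeasure circle_measure (space circle_measure)
      = (\<integral>\<^sup>+\<theta>. ennreal (indicator {0..2*pi} \<theta> * (1 / (2*pi))) \<partial>lborel)"
    unfolding circle_measure_def by (subst emeasure_density) (auto intro!: nn_integral_cong)
  also have "\<dots> = ennreal (1 / (2*pi) * (2*pi - 0))"
    by (intro nn_integral_has_integral_lebesgue has_integral_const_real[THEN has_integral_eq_rhs]) auto
  finally show ?thesis by simp
qed

lemma borel_measurable_norm_on_circle:
  assumes "continuous_on (ball 0 1) f" "\<rho> \<in> {0<..<1}"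
  shows "(\<lambda>\<theta>. cmod (f (complex_of_real \<rho> * exp (\<i> * complex_of_real \<theta>)))) \<in> borel_measurable borel"
proof (rule borel_measurable_continuous_onI)
  have "(\<lambda>\<theta>. complex_of_real \<rho> * exp (\<i> * complex_of_real \<theta>)) ` UNIV \<subseteq> ball 0 1"
    using assms(2) by (auto simp: norm_mult)
  then show "continuous_on UNIV (\<lambda>\<theta>. cmod (f (complex_of_real \<rho> * exp (\<i> * complex_of_real \<theta>))))"
    by (intro continuous_intros continuous_on_compose2[OF assms(1)]) auto
qed

lemma hardy_pow_eq_SUP_circle_measure:
  assumes "continuous_on (ball 0 1) f"
  shows "hardy_pow t f = (SUP \<rho>\<in>{0<..<1}.
     \<integral>\<^sup>+\<theta>. ennreal (cmod (f (complex_of_real \<rho> * exp (\<i> * complex_of_real \<theta>))) powr t) \<partial>circle_measure)"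
  unfolding hardy_pow_def
proof (rule SUP_cong[OF refl])
  fix \<rho> :: real assume "\<rho> \<in> {0<..<1}"
  note [measurable] = borel_measurable_norm_on_circle[OF assms this]
  show "(\<integral>\<^sup>+\<theta>. indicator {0..2*pi} \<theta> *
        ennreal (cmod (f (complex_of_real \<rho> * exp (\<i> * complex_of_real \<theta>))) powr t / (2*pi)) \<partial>lborel)
      = (\<integral>\<^sup>+\<theta>. ennreal (cmod (f (complex_of_real \<rho> * exp (\<i> * complex_of_real \<theta>))) powr t) \<partial>circle_measure)"
    unfolding circle_measure_def
    by (subst nn_integral_density) (auto intro!: nn_integral_cong simp: indicator_def simp flip: ennreal_mult')
qed

lemma hardy_pow_exponent_mono:
  assumes f: "continuous_on (ball 0 1) f" and pt: "0 < p" "p \<le> t"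
    and A: "hardy_pow t f \<le> ennreal A" "0 \<le> A"
  shows "hardy_pow p f \<le> ennreal (A powr (p / t))"
  unfolding hardy_pow_eq_SUP_circle_measure[OF f]
proof (rule SUP_least)
  fix \<rho> :: real assume \<rho>: "\<rho> \<in> {0<..<1}"
  define h where "h \<theta> = cmod (f (complex_of_real \<rho> * exp (\<i> * complex_of_real \<theta>)))" for \<theta>
  have "(\<integral>\<^sup>+\<theta>. ennreal (h \<theta> powr t) \<partial>circle_measure) \<le> hardy_pow t f"
    unfolding hardy_pow_eq_SUP_circle_measure[OF f] h_def using \<rho> by (rule SUP_upper)
  also have "\<dots> \<le> ennreal A" by (rule A(1))
  finally show "(\<integral>\<^sup>+\<theta>. ennreal (h \<theta> powr p) \<partial>circle_measure) \<le> ennreal (A powr (p / t))"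
    using borel_measurable_norm_on_circle[OF f \<rho>] pt A(2) emeasure_space_circle_measure
    by (intro nn_integral_powr_exponent_mono) (auto simp: circle_measure_def h_def)
qed

definition disc_measure :: "complex measure" where
  "disc_measure = density lborel (\<lambda>z. ennreal (indicator (ball 0 1) z / pi))"

definition bergman_measure :: "real \<Rightarrow> complex measure" where
  "bergman_measure \<alpha> = density disc_measure (\<lambda>z. ennreal ((\<alpha> + 1) * (1 - (cmod z)\<^sup>2) powr \<alpha>))"

lemma ball_inter_one_minus_norm_sq_gt:
  "ball (0::complex) 1 \<inter> {z. x < 1 - (cmod z)\<^sup>2} = ball 0 (sqrt (min 1 (max 0 (1 - x))))"
proof -
  have "cmod z < sqrt (min 1 (max 0 (1 - x))) \<longleftrightarrow> (cmod z)\<^sup>2 < min 1 (max 0 (1 - x))" for z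
    by (metis norm_ge_zero real_sqrt_abs real_sqrt_less_iff abs_of_nonneg)
  moreover have "cmod z < 1 \<longleftrightarrow> (cmod z)\<^sup>2 < 1" for z
    by (simp add: power_less_one_iff)
  moreover have "(cmod z)\<^sup>2 < max 0 (1 - x) \<longleftrightarrow> (cmod z)\<^sup>2 < 1 - x" for z
    by (simp add: less_max_iff_disj)
  ultimately show ?thesis by (auto simp: dist_norm)
qed

lemma emeasure_disc_measure_one_minus_norm_sq_gt:
  "emeasure disc_measure {z. x < 1 - (cmod z)\<^sup>2} = ennreal (min 1 (max 0 (1 - x)))"
proof -
  have "emeasure disc_measure {z. x < 1 - (cmod z)\<^sup>2}
      = (\<integral>\<^sup>+z. ennreal (1 / pi) * indicator (ball 0 1 \<inter> {z. x < 1 - (cmod z)\<^sup>2}) z \<partial>lborel)"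
    unfolding disc_measure_def
    by (subst emeasure_density) (auto intro!: nn_integral_cong simp: indicator_def)
  also have "\<dots> = ennreal (1 / pi) * emeasure lborel (ball (0::complex) (sqrt (min 1 (max 0 (1 - x)))))"
    by (subst nn_integral_cmult_indicator) (auto simp: ball_inter_one_minus_norm_sq_gt)
  also have "\<dots> = ennreal (min 1 (max 0 (1 - x)))"
    by (simp add: emeasure_ball unit_ball_vol_2 flip: ennreal_mult)
  finally show ?thesis .
qed

lemma distr_disc_measure_one_minus_norm_sq:
  "distr disc_measure borel (\<lambda>z. 1 - (cmod z)\<^sup>2) = density lborel (indicator {0..1::real})"
proof -
  have distr_eq: "emeasure (distr disc_measure borel (\<lambda>z. 1 - (cmod z)\<^sup>2)) {x<..}
      = ennreal (min 1 (max 0 (1 - x)))" for x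
    by (subst emeasure_distr) (auto simp: vimage_def disc_measure_def
        simp flip: emeasure_disc_measure_one_minus_norm_sq_gt)
  have uniform_eq: "emeasure (density lborel (indicator {0..1::real})) {x<..}
      = ennreal (min 1 (max 0 (1 - x)))" for x
  proof -
    have "emeasure (density lborel (indicator {0..1::real})) {x<..} = emeasure lborel ({0..1} \<inter> {x<..})"
      by (subst emeasure_density) (auto intro!: nn_integral_cong simp: indicator_def
          simp flip: nn_integral_indicator)
    also have "\<dots> = ennreal (min 1 (max 0 (1 - x)))"
    proof -
      consider "x < 0" | "0 \<le> x" "x < 1" | "1 \<le> x" by linarith
      then show ?thesis
      proof cases
        case 1
        then have "{0..1} \<inter> {x<..} = {0..(1::real)}" by auto
        then show ?thesis using 1 by simp
      next
        case 2
        then have "{0..1} \<inter> {x<..} = {x<..(1::real)}" by auto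
        then show ?thesis using 2 by simp
      next
        case 3
        then have "{0..1} \<inter> {x<..} = ({}::real set)" by auto
        then show ?thesis using 3 by simp
      qed
    qed
    finally show ?thesis .
  qed
  show ?thesis
    by (rule measure_eqI_lessThan) (auto simp: distr_eq uniform_eq)
qed

lemma emeasure_space_bergman_measure:
  assumes "\<alpha> > -1"
  shows "emeasure (bergman_measure \<alpha>) (space (bergman_measure \<alpha>)) = 1"
proof -
  have "emeasure (bergman_measure \<alpha>) (space (bergman_measure \<alpha>))
      = (\<integral>\<^sup>+z. ennreal ((\<alpha> + 1) * (1 - (cmod z)\<^sup>2) powr \<alpha>) \<partial>disc_measure)"
    unfolding bergman_measure_def by (subst emeasure_density) (auto simp: disc_measure_def)
  also have "\<dots> = (\<integral>\<^sup>+x. ennreal ((\<alpha> + 1) * x powr \<alpha>) \<partial>distr disc_measure borel (\<lambda>z. 1 - (cmod z)\<^sup>2))"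
    by (subst nn_integral_distr) (auto simp: disc_measure_def)
  also have "\<dots> = (\<integral>\<^sup>+x. ennreal (indicator {0..1} x * ((\<alpha> + 1) * x powr \<alpha>)) \<partial>lborel)"
    unfolding distr_disc_measure_one_minus_norm_sq
    by (subst nn_integral_density) (auto intro!: nn_integral_cong simp: indicator_def)
  also have "\<dots> = ennreal ((\<alpha> + 1) * (1 powr (\<alpha> + 1) / (\<alpha> + 1)))"
    using assms by (intro nn_integral_has_integral_lebesgue has_integral_mult_right has_integral_powr_from_0) auto
  finally show ?thesis using assms by simp
qed

lemma borel_measurable_indicator_ball_norm:
  assumes "continuous_on (ball 0 1) f"
  shows "(\<lambda>z. indicator (ball 0 1) z * cmod (f z)) \<in> borel_measurable borel"
  using borel_measurable_continuous_on_indicator[of "ball 0 1" "\<lambda>z. cmod (f z)"] assms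
  by (simp add: continuous_on_norm)

text \<open>The indicator makes the integrand measurable although \<open>f\<close> is only continuous on the disc.\<close>
lemma bergman_pow_eq_nn_integral:
  assumes f: "continuous_on (ball 0 1) f" and \<alpha>: "\<alpha> > -1" and t: "0 < t"
  shows "bergman_pow \<alpha> t f
    = (\<integral>\<^sup>+z. ennreal ((indicator (ball 0 1) z * cmod (f z)) powr t) \<partial>bergman_measure \<alpha>)"
proof -
  have [measurable]: "ball (0::complex) 1 \<in> sets borel" by simp
  define h where "h = (\<lambda>z::complex. indicator (ball 0 1) z * cmod (f z))"
  have [measurable]: "h \<in> borel_measurable borel"
    unfolding h_def using f by (rule borel_measurable_indicator_ball_norm)
  have "bergman_pow \<alpha> t f = ennreal (\<alpha> + 1) * (\<integral>\<^sup>+z. ennreal (h z powr t * (1 - (cmod z)\<^sup>2) powr \<alpha> / pi) \<partial>lborel)"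
    unfolding bergman_pow_def using t
    by (auto intro!: arg_cong2[where f="(*)"] nn_integral_cong simp: h_def indicator_def)
  also have "\<dots> = (\<integral>\<^sup>+z. ennreal (\<alpha> + 1) * ennreal (h z powr t * (1 - (cmod z)\<^sup>2) powr \<alpha> / pi) \<partial>lborel)"
    by (rule nn_integral_cmult[symmetric]) measurable
  also have "\<dots> = (\<integral>\<^sup>+z. ennreal (indicator (ball 0 1) z / pi) *
      (ennreal ((\<alpha> + 1) * (1 - (cmod z)\<^sup>2) powr \<alpha>) * ennreal (h z powr t)) \<partial>lborel)"
    using \<alpha> t by (intro nn_integral_cong) (auto simp: h_def indicator_def simp flip: ennreal_mult)
  also have "\<dots> = (\<integral>\<^sup>+z. ennreal ((\<alpha> + 1) * (1 - (cmod z)\<^sup>2) powr \<alpha>) * ennreal (h z powr t) \<partial>disc_measure)"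
    unfolding disc_measure_def by (subst nn_integral_density) auto
  also have "\<dots> = (\<integral>\<^sup>+z. ennreal (h z powr t) \<partial>bergman_measure \<alpha>)"
    unfolding bergman_measure_def by (subst nn_integral_density) (auto simp: disc_measure_def)
  finally show ?thesis by (simp add: h_def)
qed

lemma bergman_pow_exponent_mono:
  assumes f: "continuous_on (ball 0 1) f" and \<alpha>: "\<alpha> > -1" and pt: "0 < p" "p \<le> t"
    and A: "bergman_pow \<alpha> t f \<le> ennreal A" "0 \<le> A"
  shows "bergman_pow \<alpha> p f \<le> ennreal (A powr (p / t))"
proof -
  have "0 < t" using pt by linarith
  then show ?thesis
    using A pt emeasure_space_bergman_measure[OF \<alpha>] borel_measurable_indicator_ball_norm[OF f]
    unfolding bergman_pow_eq_nn_integral[OF f \<alpha> \<open>0 < t\<close>] bergman_pow_eq_nn_integral[OF f \<alpha> pt(1)]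
    by (intro nn_integral_powr_exponent_mono) (auto simp: bergman_measure_def disc_measure_def)
qed

lemma norm_pow_exponent_mono:
  assumes "\<alpha> \<ge> -1" "continuous_on (ball 0 1) f" "0 < p" "p \<le> t"
    and "norm_pow \<alpha> t f \<le> ennreal A" "0 \<le> A"
  shows "norm_pow \<alpha> p f \<le> ennreal (A powr (p / t))"
  using assms hardy_pow_exponent_mono[of f p t A] bergman_pow_exponent_mono[of f \<alpha> p t A]
  by (cases "\<alpha> = -1") (auto simp: norm_pow_def)

lemma disc_aut_eq_neg_Moebius: "disc_aut a z = - Moebius_function 0 a z"
  by (simp add: Moebius_function_simple disc_aut_def minus_divide_left)

lemma holomorphic_on_comp_disc_aut:
  assumes g: "g holomorphic_on ball 0 1" and a: "a \<in> ball 0 1"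
  shows "(g \<circ> disc_aut a) holomorphic_on ball 0 1"
proof (rule holomorphic_on_compose_gen[OF _ g])
  show "disc_aut a holomorphic_on ball 0 1"
    using Moebius_function_holomorphic[of a 0] a
    by (simp add: disc_aut_eq_neg_Moebius[abs_def] holomorphic_on_minus)
  show "disc_aut a ` ball 0 1 \<subseteq> ball 0 1"
    using Moebius_function_norm_lt_1[of a] a by (auto simp: disc_aut_eq_neg_Moebius)
qed

theorem proposition2p10:
  fixes \<alpha> q r :: real and g :: "complex \<Rightarrow> complex"
  assumes "\<alpha> \<ge> -1" and "0 < q" and "q < r"
    and "g holomorphic_on ball 0 1"
  shows "G \<alpha> q g \<le> G \<alpha> r g"
  unfolding G_def
proof (rule SUP_subset_mono[OF order_refl])
  fix a :: complex assume a: "a \<in> ball 0 1"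
  have f: "continuous_on (ball 0 1) (g \<circ> disc_aut a)"
    using holomorphic_on_comp_disc_aut[OF assms(4) a] by (rule holomorphic_on_imp_continuous_on)
  show "eroot (2*q) (norm_pow \<alpha> (2*q) (g \<circ> disc_aut a) - ennreal (cmod (g a) powr (2*q)))
      \<le> eroot (2*r) (norm_pow \<alpha> (2*r) (g \<circ> disc_aut a) - ennreal (cmod (g a) powr (2*r)))"
    using assms(2,3) norm_pow_exponent_mono[OF assms(1) f, of "2*q" "2*r"]
    by (intro eroot_diff_powr_le) auto
qed

end
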